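(* For $0\le L<1<R$ define $$\Phi(L,R)=\mathrm{p.v.}\int_L^R\frac{\pi\sqrt{(R^2-x^2)(x^2-L^2)}}{x^2-1}\,dx,$$ the principal value being taken at $x=1$. (i) $\Phi(L,R)$ is strictly increasing in $L$ and strictly increasing in $R$. (ii) There is a unique $R_c>1$ with $\Phi(0,R_c)=0$ (numerically $R_c\approx1.8102$). (iii) If $\Phi(L,R)=0$, then $L+R<2$ and $L^2+R^2>2$. *)

theory Defs
  imports "HOL-Analysis.Analysis"
begin

definition phi_integrand :: "real \<Rightarrow> real \<Rightarrow> real \<Rightarrow> real" where
  "phi_integrand L R x = pi * sqrt ((R\<^sup>2 - x\<^sup>2) * (x\<^sup>2 - L\<^sup>2)) / (x\<^sup>2 - 1)"

definition Phi :: "real \<Rightarrow> real \<Rightarrow> real" where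
  "Phi L R = Lim (at_right 0)
     (\<lambda>\<epsilon>. integral {L..1 - \<epsilon>} (phi_integrand L R) + integral {1 + \<epsilon>..R} (phi_integrand L R))"

end

theory Submission
  imports Defs
begin

text \<open>
  With \<open>P(x) = pi sqrt ((R\<^sup>2 - x\<^sup>2) (x\<^sup>2 - L\<^sup>2)) / (x + 1)\<close>, \<open>\<Phi>(L,R)\<close> is the principal value
  of \<open>P(x) / (x - 1)\<close>. For any \<open>n\<close> differentiable at 1 with \<open>c n(1) = P(1)\<close> it is the proper
  integral of \<open>(P - c n) / (x - 1)\<close> plus \<open>c\<close> times the principal value of \<open>n(x) / (x - 1)\<close>.
  Taking \<open>n(x) / (x - 1)\<close> to be the derivative of \<open>sqrt u - C artanh (sqrt u / C)\<close> for a
  suitable polynomial \<open>u\<close> makes that principal value explicit.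
  Splitting off the factor \<open>sqrt (R\<^sup>2 - x\<^sup>2)\<close> (resp. \<open>sqrt (x\<^sup>2 - L\<^sup>2)\<close>) in this way leaves a
  remainder of constant sign whose integral is monotone in \<open>R\<close> (resp. \<open>L\<close>), while the boundary
  term is strictly monotone; this gives (i). For \<open>L = 0\<close> the remainder vanishes and
  \<open>\<Phi>(0,R) = pi (sqrt (R\<^sup>2 - 1) arcosh R - R)\<close>, which changes sign, giving (ii).
  On the curves \<open>L + R = 2\<close> and \<open>L\<^sup>2 + R\<^sup>2 = 2\<close> the boundary terms vanish and the remainder
  has a fixed sign, so \<open>\<Phi> > 0\<close>, resp. \<open>\<Phi> < 0\<close> there; together with (i) this gives (iii).
\<close>

section \<open>Integrals and principal values\<close>

lemma has_real_derivative_ln_abs: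
  fixes x :: real
  assumes "x \<noteq> 0"
  shows "((\<lambda>x. ln \<bar>x\<bar>) has_real_derivative 1 / x) (at x)"
proof (cases "x > 0")
  case True
  have "(ln has_real_derivative 1 / x) (at x)"
    using DERIV_ln_divide[OF True] .
  then show ?thesis
    by (rule has_field_derivative_transform_within_open[where S = "{0<..}"]) (use True in auto)
next
  case False
  with assms have "x < 0" by simp
  have "((\<lambda>x. ln (- x)) has_real_derivative 1 / x) (at x)"
    using DERIV_chain2[OF DERIV_ln_divide[of "- x"] DERIV_minus[OF DERIV_ident]] \<open>x < 0\<close>
    by simp
  then show ?thesis
    by (rule has_field_derivative_transform_within_open[where S = "{..<0}"]) (use \<open>x < 0\<close> in auto)
qed

lemma integrable_on_difference_quotient:
  fixes Q :: "real \<Rightarrow> real"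
  assumes Q: "continuous_on {a..b} Q" and D: "(Q has_real_derivative D) (at p)"
  shows "(\<lambda>x. (Q x - Q p) / (x - p)) integrable_on {a..b}"
proof -
  define G where "G x = (if x = p then D else (Q x - Q p) / (x - p))" for x
  have "(G \<longlongrightarrow> D) (at p)"
  proof (rule Lim_transform_within_open[where s = UNIV])
    show "((\<lambda>x. (Q x - Q p) / (x - p)) \<longlongrightarrow> D) (at p)"
      using D by (simp add: has_field_derivative_iff)
  qed (auto simp: G_def)
  then have "isCont G p"
    by (simp add: isCont_def G_def)
  then have "continuous_on {a..b} G"
    unfolding continuous_on_eq_continuous_within
  proof (intro ballI)
    fix x assume x: "x \<in> {a..b}"
    show "continuous (at x within {a..b}) G"
    proof (cases "x = p")
      case False
      have "continuous (at x within {a..b}) (\<lambda>y. (Q y - Q p) / (y - p))"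
        using Q x False by (intro continuous_intros) (auto simp: continuous_on_eq_continuous_within)
      then show ?thesis
        by (rule continuous_transform_within[where \<delta> = "dist x p"])
           (use False x in \<open>auto simp: G_def dist_commute\<close>)
    qed (use \<open>isCont G p\<close> continuous_at_imp_continuous_at_within in blast)
  qed
  then have "G integrable_on {a..b}"
    by (rule integrable_continuous_interval)
  then show ?thesis
    by (rule integrable_spike_finite[where S = "{p}", rotated 2]) (auto simp: G_def)
qed

lemma integral_pos_if_pos_at:
  fixes f :: "real \<Rightarrow> real"
  assumes f: "f integrable_on {a..b}" "\<And>x. x \<in> {a..b} \<Longrightarrow> 0 \<le> f x"
    and x\<^sub>0: "x\<^sub>0 \<in> {a<..<b}" "isCont f x\<^sub>0" "0 < f x\<^sub>0"
  shows "0 < integral {a..b} f"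
proof -
  obtain d where d: "0 < d" "\<And>y. dist y x\<^sub>0 < d \<Longrightarrow> dist (f y) (f x\<^sub>0) < f x\<^sub>0 / 2"
    using x\<^sub>0(2,3) unfolding continuous_at_eps_delta by (metis half_gt_zero)
  define h where "h = min (d / 2) (min (x\<^sub>0 - a) (b - x\<^sub>0))"
  have h: "0 < h" "h < d" "{x\<^sub>0 - h..x\<^sub>0 + h} \<subseteq> {a..b}"
    using d x\<^sub>0(1) by (auto simp: h_def)
  have "0 < 2 * h * (f x\<^sub>0 / 2)"
    using h x\<^sub>0(3) by simp
  also have "\<dots> = integral {x\<^sub>0 - h..x\<^sub>0 + h} (\<lambda>_. f x\<^sub>0 / 2)"
    using h by simp
  also have "\<dots> \<le> integral {x\<^sub>0 - h..x\<^sub>0 + h} f"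
  proof (rule integral_le[OF _ integrable_on_subinterval[OF f(1) h(3)]])
    fix y assume "y \<in> {x\<^sub>0 - h..x\<^sub>0 + h}"
    then have "dist (f y) (f x\<^sub>0) < f x\<^sub>0 / 2"
      using h by (intro d(2)) (auto simp: dist_real_def)
    then show "f x\<^sub>0 / 2 \<le> f y"
      unfolding dist_real_def by arith
  qed (rule Henstock_Kurzweil_Integration.integrable_const_ivl)
  also have "\<dots> \<le> integral {a..b} f"
    using f h by (intro integral_subset_le integrable_on_subinterval[OF f(1)]) auto
  finally show ?thesis .
qed

lemma pv_tendsto_integral:
  fixes g :: "real \<Rightarrow> real"
  assumes g: "g integrable_on {a..b}" and p: "a < p" "p < b"
  shows "((\<lambda>e. integral {a..p - e} g + integral {p + e..b} g) \<longlongrightarrow> integral {a..b} g) (at_right 0)"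
proof -
  define I where "I x = integral {a..x} g" for x
  have "isCont I p"
    using continuous_on_interior[OF indefinite_integral_continuous_1[OF g], of p] p
    by (simp add: I_def[abs_def])
  then have lim: "((\<lambda>e. I (p - e) + (I b - I (p + e))) \<longlongrightarrow> I b) (at_right 0)"
    by (auto intro!: tendsto_eq_intros isCont_tendsto_compose[of p I])
  have ev: "\<forall>\<^sub>F e in at_right 0. I (p - e) + (I b - I (p + e))
      = integral {a..p - e} g + integral {p + e..b} g"
  proof -
    have "\<forall>\<^sub>F e in at_right 0. e \<in> {0<..<b - p}"
      using p by (intro eventually_at_right_real) simp
    then show ?thesis
    proof (rule eventually_mono)
      fix e assume "e \<in> {0<..<b - p}"
      then have "integral {a..p + e} g + integral {p + e..b} g = I b"
        unfolding I_def using p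
        by (intro Henstock_Kurzweil_Integration.integral_combine g) auto
      then show "I (p - e) + (I b - I (p + e)) = integral {a..p - e} g + integral {p + e..b} g"
        by (simp add: I_def)
    qed
  qed
  show ?thesis
    using lim tendsto_cong[OF ev] by (simp add: I_def)
qed

lemma pv_tendsto_log_singular:
  fixes f g h M M0 :: "real \<Rightarrow> real"
  assumes p: "a < p" "p < b"
    and g: "g integrable_on {a..b}"
    and M0: "continuous_on {a..b} M0"
    and M: "\<And>x. x \<in> {a..b} - {p} \<Longrightarrow> M x = M0 x + k * ln \<bar>x - p\<bar>"
    and h: "\<And>x. x \<in> {a<..<b} - {p} \<Longrightarrow> (M has_real_derivative h x) (at x)"
    and f: "\<And>x. x \<in> {a..b} - {p} \<Longrightarrow> f x = g x + c * h x"
  shows "((\<lambda>e. integral {a..p - e} f + integral {p + e..b} f)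
           \<longlongrightarrow> integral {a..b} g + c * (M b - M a)) (at_right 0)"
proof -
  have f_integral: "integral {u..v} f = integral {u..v} g + c * (M v - M u)"
    if uv: "u \<le> v" "{u..v} \<subseteq> {a..b}" "p \<notin> {u..v}" for u v
  proof -
    have "continuous_on {u..v} (\<lambda>x. M0 x + k * ln \<bar>x - p\<bar>)"
      using uv by (intro continuous_intros continuous_on_subset[OF M0]) auto
    then have "continuous_on {u..v} M"
      by (rule continuous_on_eq) (use uv M in auto)
    then have "(h has_integral M v - M u) {u..v}"
      using uv h by (intro fundamental_theorem_of_calculus_interior)
        (auto simp flip: has_real_derivative_iff_has_vector_derivative)
    moreover have "(g has_integral integral {u..v} g) {u..v}"
      using integrable_on_subinterval[OF g uv(2)] by blast
    ultimately have "((\<lambda>x. g x + c * h x) has_integral integral {u..v} g + c * (M v - M u)) {u..v}"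
      by (intro has_integral_add has_integral_mult_right)
    then show ?thesis
      using uv f by (intro integral_unique) (auto intro: has_integral_cong[THEN iffD1, rotated])
  qed
  have "\<forall>\<^sub>F e in at_right 0. e \<in> {0<..<min (p - a) (b - p)}"
    using p by (intro eventually_at_right_real) simp
  then have ev: "\<forall>\<^sub>F e in at_right 0.
      (integral {a..p - e} g + integral {p + e..b} g) + c * (M b - M a) + c * (M0 (p - e) - M0 (p + e))
      = integral {a..p - e} f + integral {p + e..b} f"
  proof (rule eventually_mono)
    fix e assume e: "e \<in> {0<..<min (p - a) (b - p)}"
    \<comment> \<open>the logarithmic singularities at \<open>p - e\<close> and \<open>p + e\<close> cancel\<close>
    have "M (p - e) - M (p + e) = M0 (p - e) - M0 (p + e)"
      using e M[of "p - e"] M[of "p + e"] by auto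
    then have "c * M (p - e) - c * M (p + e) = c * M0 (p - e) - c * M0 (p + e)"
      by (metis right_diff_distrib)
    then show "(integral {a..p - e} g + integral {p + e..b} g) + c * (M b - M a)
        + c * (M0 (p - e) - M0 (p + e)) = integral {a..p - e} f + integral {p + e..b} f"
      using e f_integral[of a "p - e"] f_integral[of "p + e" b] by (auto simp: algebra_simps)
  qed
  have "isCont M0 p"
    using continuous_on_interior[OF M0, of p] p by simp
  then have "((\<lambda>e. c * (M0 (p - e) - M0 (p + e))) \<longlongrightarrow> 0) (at_right 0)"
    by (auto intro!: tendsto_eq_intros isCont_tendsto_compose[of p M0])
  then have "((\<lambda>e. (integral {a..p - e} g + integral {p + e..b} g) + c * (M b - M a)
      + c * (M0 (p - e) - M0 (p + e))) \<longlongrightarrow> integral {a..b} g + c * (M b - M a) + 0) (at_right 0)"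
    by (intro tendsto_add pv_tendsto_integral[OF g p] tendsto_const)
  then show ?thesis
    using tendsto_cong[OF ev] by simp
qed

section \<open>A primitive of \<open>s\<^sup>2 / (s\<^sup>2 - C\<^sup>2)\<close>\<close>

text \<open>For \<open>0 \<le> s < C\<close> this is \<open>s - C artanh (s / C)\<close>.\<close>

definition log_primitive :: "real \<Rightarrow> real \<Rightarrow> real" where
  "log_primitive C s = s - C * ln (C + s) + C / 2 * ln \<bar>C\<^sup>2 - s\<^sup>2\<bar>"

lemma has_real_derivative_log_primitive:
  assumes "0 < C + s" "s\<^sup>2 \<noteq> C\<^sup>2"
  shows "(log_primitive C has_real_derivative s\<^sup>2 / (s\<^sup>2 - C\<^sup>2)) (at s)"
proof -
  have "C\<^sup>2 - s\<^sup>2 \<noteq> 0"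
    using assms(2) by simp
  then have "((\<lambda>s. ln \<bar>C\<^sup>2 - s\<^sup>2\<bar>) has_real_derivative 1 / (C\<^sup>2 - s\<^sup>2) * (- (2 * s))) (at s)"
    by (intro DERIV_chain2[OF has_real_derivative_ln_abs]) (auto intro!: derivative_eq_intros)
  moreover have "((\<lambda>s. ln (C + s)) has_real_derivative 1 / (C + s)) (at s)"
    using assms(1) by (auto intro!: derivative_eq_intros)
  ultimately have "(log_primitive C has_real_derivative
      1 - C * (1 / (C + s)) + C / 2 * (1 / (C\<^sup>2 - s\<^sup>2) * (- (2 * s)))) (at s)"
    unfolding log_primitive_def[abs_def] by (intro DERIV_add DERIV_diff DERIV_cmult DERIV_ident)
  moreover have "1 - C * (1 / (C + s)) + C / 2 * (1 / (C\<^sup>2 - s\<^sup>2) * (- (2 * s)))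
      = s\<^sup>2 / (s\<^sup>2 - C\<^sup>2)"
  proof -
    have "C + s \<noteq> 0" "C - s \<noteq> 0"
      using assms by auto
    moreover have factor: "C\<^sup>2 - s\<^sup>2 = (C + s) * (C - s)" "s\<^sup>2 - C\<^sup>2 = - ((C + s) * (C - s))"
      by (simp_all add: algebra_simps power2_eq_square)
    ultimately show ?thesis
      unfolding factor by (simp add: divide_simps) (simp add: algebra_simps power2_eq_square)
  qed
  ultimately show ?thesis
    by simp
qed

lemma log_primitive_0: "0 < C \<Longrightarrow> log_primitive C 0 = 0"
  by (simp add: log_primitive_def ln_realpow)

lemma log_primitive_hypot:
  assumes "0 < q"
  shows "log_primitive C (sqrt (C\<^sup>2 + q\<^sup>2)) = sqrt (C\<^sup>2 + q\<^sup>2) - C * ln (C + sqrt (C\<^sup>2 + q\<^sup>2)) + C * ln q"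
  using assms by (simp add: log_primitive_def ln_realpow add_pos_nonneg)

lemma log_primitive_hypot_strict_antimono:
  assumes q: "0 < q" and C: "0 \<le> C\<^sub>1" "C\<^sub>1 < C\<^sub>2"
  shows "log_primitive C\<^sub>2 (sqrt (C\<^sub>2\<^sup>2 + q\<^sup>2)) < log_primitive C\<^sub>1 (sqrt (C\<^sub>1\<^sup>2 + q\<^sup>2))"
  unfolding log_primitive_hypot[OF q]
proof (rule DERIV_neg_imp_decreasing_open[OF C(2)])
  fix C :: real assume "C\<^sub>1 < C" "C < C\<^sub>2"
  then have "0 < C" using C by simp
  define s where "s = sqrt (C\<^sup>2 + q\<^sup>2)"
  have s: "q < s" "0 < s" "s\<^sup>2 = C\<^sup>2 + q\<^sup>2" "0 < C + s"
    using \<open>0 < C\<close> q by (auto simp: s_def real_less_rsqrt add_pos_nonneg)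
  have "((\<lambda>C. sqrt (C\<^sup>2 + q\<^sup>2) - C * ln (C + sqrt (C\<^sup>2 + q\<^sup>2)) + C * ln q) has_real_derivative
      C / s - (ln (C + s) + C * ((1 + C / s) / (C + s))) + ln q) (at C)"
    using s \<open>0 < C\<close> unfolding s_def
    by (auto intro!: derivative_eq_intros simp: divide_simps)
  moreover have "C / s - (ln (C + s) + C * ((1 + C / s) / (C + s))) + ln q = ln q - ln (C + s)"
    using s by (simp add: divide_simps) (simp add: algebra_simps)
  moreover have "ln q < ln (C + s)"
    using s \<open>0 < C\<close> q by simp
  ultimately show "\<exists>y. ((\<lambda>C. sqrt (C\<^sup>2 + q\<^sup>2) - C * ln (C + sqrt (C\<^sup>2 + q\<^sup>2)) + C * ln q)
      has_real_derivative y) (at C) \<and> y < 0"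
    by (intro exI[of _ "ln q - ln (C + s)"]) simp
next
  have "0 < C + sqrt (C\<^sup>2 + q\<^sup>2)" if "C \<in> {C\<^sub>1..C\<^sub>2}" for C
    using that C q by (intro add_nonneg_pos) (auto simp: add_nonneg_pos)
  then show "continuous_on {C\<^sub>1..C\<^sub>2} (\<lambda>C. sqrt (C\<^sup>2 + q\<^sup>2) - C * ln (C + sqrt (C\<^sup>2 + q\<^sup>2)) + C * ln q)"
    by (intro continuous_intros) (auto simp: less_imp_neq[symmetric])
qed

section \<open>Splitting off the singularity of \<open>\<Phi>\<close>\<close>

definition phi_numerator :: "real \<Rightarrow> real \<Rightarrow> real \<Rightarrow> real" where
  "phi_numerator L R x = pi * sqrt ((R\<^sup>2 - x\<^sup>2) * (x\<^sup>2 - L\<^sup>2)) / (x + 1)"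

lemma phi_integrand_eq:
  assumes "0 \<le> x"
  shows "phi_integrand L R x = phi_numerator L R x / (x - 1)"
proof -
  have "x\<^sup>2 - 1 = (x + 1) * (x - 1)"
    by (simp add: algebra_simps power2_eq_square)
  then show ?thesis
    using assms by (simp add: phi_integrand_def phi_numerator_def)
qed

lemma continuous_on_phi_numerator: "0 \<le> L \<Longrightarrow> continuous_on {L..R} (phi_numerator L R)"
  unfolding phi_numerator_def[abs_def] by (intro continuous_intros) auto

lemma phi_numerator_differentiable:
  assumes "0 \<le> L" "L < 1" "1 < R"
  shows "phi_numerator L R differentiable (at 1)"
proof -
  have "0 < (R\<^sup>2 - 1\<^sup>2) * (1\<^sup>2 - L\<^sup>2)"
    using assms by (simp add: abs_square_less_1)
  then show ?thesis
    unfolding phi_numerator_def[abs_def] real_differentiable_def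
    by (intro exI) (auto intro!: derivative_eq_intros)
qed

lemma integrable_phi_remainder:
  assumes LR: "0 \<le> L" "L < 1" "1 < R"
    and n: "continuous_on {L..R} n" "n differentiable (at 1)"
    and c: "phi_numerator L R 1 = c * n 1"
  shows "(\<lambda>x. (phi_numerator L R x - c * n x) / (x - 1)) integrable_on {L..R}"
proof -
  obtain D where D: "(phi_numerator L R has_real_derivative D) (at 1)"
    using phi_numerator_differentiable[OF LR] real_differentiable_def by blast
  obtain n' where n': "(n has_real_derivative n') (at 1)"
    using n(2) real_differentiable_def by blast
  have "(\<lambda>x. ((phi_numerator L R x - c * n x) - (phi_numerator L R 1 - c * n 1)) / (x - 1))
      integrable_on {L..R}"
    using continuous_on_phi_numerator[OF LR(1)] n(1) n' D
    by (intro integrable_on_difference_quotient[where D = "D - c * n'"] continuous_intros)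
       (auto intro!: derivative_eq_intros)
  then show ?thesis
    using c by simp
qed

lemma has_real_derivative_log_primitive_sqrt:
  assumes u: "(u has_real_derivative u') (at x)" "0 < u x" "u x \<noteq> C\<^sup>2" and C: "0 < C"
  shows "((\<lambda>x. log_primitive C (sqrt (u x))) has_real_derivative
           u' * sqrt (u x) / (2 * (u x - C\<^sup>2))) (at x)"
proof -
  define t where "t = sqrt (u x)"
  have t: "0 < t" "t\<^sup>2 = u x"
    using u(2) by (auto simp: t_def)
  have "((\<lambda>x. log_primitive C (sqrt (u x))) has_real_derivative
      t\<^sup>2 / (t\<^sup>2 - C\<^sup>2) * (inverse t / 2 * u')) (at x)"
    unfolding t_def using u C
    by (intro DERIV_chain2[OF has_real_derivative_log_primitive] DERIV_chain2[OF DERIV_real_sqrt])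
       (auto simp: add_pos_pos)
  moreover have "t\<^sup>2 / (t\<^sup>2 - C\<^sup>2) * (inverse t / 2 * u') = u' * t / (2 * (t\<^sup>2 - C\<^sup>2))"
    using t(1) u(3) unfolding t(2)[symmetric]
    by (simp add: divide_simps) (simp add: algebra_simps power2_eq_square)
  ultimately show ?thesis
    by (simp add: t(2) flip: t_def)
qed

lemma Phi_eq_log_primitive:
  fixes u u' n q :: "real \<Rightarrow> real"
  assumes LR: "0 \<le> L" "L < 1" "1 < R" and C: "0 < C"
    and u: "continuous_on {L..R} u" "\<And>x. x \<in> {L..R} \<Longrightarrow> 0 \<le> u x"
           "\<And>x. x \<in> {L<..<R} \<Longrightarrow> 0 < u x"
    and u': "\<And>x. x \<in> {L<..<R} - {1} \<Longrightarrow> (u has_real_derivative u' x) (at x)"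
    and sing: "\<And>x. x \<in> {L..R} \<Longrightarrow> \<bar>C\<^sup>2 - u x\<bar> = \<bar>x - 1\<bar> ^ m * q x"
    and q: "continuous_on {L..R} q" "\<And>x. x \<in> {L..R} \<Longrightarrow> 0 < q x"
    and n: "continuous_on {L..R} n" "n differentiable (at 1)"
    and n_eq: "\<And>x. x \<in> {L<..<R} - {1} \<Longrightarrow> n x / (x - 1) = u' x * sqrt (u x) / (2 * (u x - C\<^sup>2))"
    and c: "phi_numerator L R 1 = c * n 1"
  shows "Phi L R = integral {L..R} (\<lambda>x. (phi_numerator L R x - c * n x) / (x - 1))
                   + c * (log_primitive C (sqrt (u R)) - log_primitive C (sqrt (u L)))"
proof -
  define g where "g x = (phi_numerator L R x - c * n x) / (x - 1)" for x
  have g: "g integrable_on {L..R}"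
    unfolding g_def[abs_def] by (rule integrable_phi_remainder[OF LR n c])
  define M where "M x = log_primitive C (sqrt (u x))" for x
  define M0 where "M0 x = sqrt (u x) - C * ln (C + sqrt (u x)) + C / 2 * ln (q x)" for x
  have "0 < C + sqrt (u x)" if "x \<in> {L..R}" for x
    using that u(2) C by (simp add: add_pos_nonneg)
  then have M0: "continuous_on {L..R} M0"
    unfolding M0_def using q u(1) by (intro continuous_intros) (auto simp: less_imp_neq[symmetric])
  have M: "M x = M0 x + (C * m / 2) * ln \<bar>x - 1\<bar>" if "x \<in> {L..R} - {1}" for x
  proof -
    have "ln \<bar>C\<^sup>2 - u x\<bar> = m * ln \<bar>x - 1\<bar> + ln (q x)"
      using that sing[of x] q(2)[of x] by (simp add: ln_mult ln_realpow)
    then show ?thesis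
      using that u(2)[of x] by (simp add: M_def M0_def log_primitive_def algebra_simps)
  qed
  have M': "(M has_real_derivative n x / (x - 1)) (at x)" if x: "x \<in> {L<..<R} - {1}" for x
    unfolding M_def[abs_def] n_eq[OF x] using x u(3)[of x] sing[of x] q(2)[of x] C
    by (intro has_real_derivative_log_primitive_sqrt u') auto
  have f: "phi_integrand L R x = g x + c * (n x / (x - 1))" if "x \<in> {L..R} - {1}" for x
    using that LR by (simp add: phi_integrand_eq g_def diff_divide_distrib)
  have "((\<lambda>e. integral {L..1 - e} (phi_integrand L R) + integral {1 + e..R} (phi_integrand L R))
      \<longlongrightarrow> integral {L..R} g + c * (M R - M L)) (at_right 0)"
    using LR by (intro pv_tendsto_log_singular[OF _ _ g M0 M M' f]) auto
  then show ?thesis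
    unfolding Phi_def g_def M_def by (intro tendsto_Lim) auto
qed

section \<open>Monotonicity\<close>

lemma sgn_sqrt_diff_divide:
  fixes u v y :: real
  assumes "0 \<le> u" "0 \<le> v"
  shows "sgn ((sqrt u - sqrt v) / y) = sgn ((u - v) / y)"
proof -
  have "sgn (sqrt u - sqrt v) = sgn (u - v)"
    using assms by (cases u v rule: linorder_cases) auto
  then show ?thesis
    by simp
qed

definition left_kernel :: "real \<Rightarrow> real \<Rightarrow> real" where
  "left_kernel L x = (sqrt (x\<^sup>2 - L\<^sup>2) - sqrt (1 - L\<^sup>2) * x) / (x\<^sup>2 - 1)"

definition right_kernel :: "real \<Rightarrow> real \<Rightarrow> real" where
  "right_kernel R x = (sqrt (R\<^sup>2 - x\<^sup>2) - sqrt (R\<^sup>2 - 1) * x) / (x\<^sup>2 - 1)"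

lemma left_kernel_nonneg:
  assumes "0 \<le> L" "L \<le> 1" "L \<le> x"
  shows "0 \<le> left_kernel L x"
proof -
  have sqrt_eq: "sqrt (1 - L\<^sup>2) * x = sqrt ((1 - L\<^sup>2) * x\<^sup>2)"
    using assms by (simp add: real_sqrt_mult)
  moreover have "(x\<^sup>2 - L\<^sup>2) - (1 - L\<^sup>2) * x\<^sup>2 = L\<^sup>2 * (x\<^sup>2 - 1)"
    by (simp add: algebra_simps)
  then have "0 \<le> ((x\<^sup>2 - L\<^sup>2) - (1 - L\<^sup>2) * x\<^sup>2) / (x\<^sup>2 - 1)"
    by (cases "x\<^sup>2 = 1") simp_all
  moreover have "L\<^sup>2 \<le> x\<^sup>2" "L\<^sup>2 \<le> 1"
    using assms by (auto intro: power_mono simp: power_le_one)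
  ultimately have "sgn (left_kernel L x) = sgn (((x\<^sup>2 - L\<^sup>2) - (1 - L\<^sup>2) * x\<^sup>2) / (x\<^sup>2 - 1))"
    unfolding left_kernel_def sqrt_eq by (intro sgn_sqrt_diff_divide) auto
  with \<open>0 \<le> ((x\<^sup>2 - L\<^sup>2) - (1 - L\<^sup>2) * x\<^sup>2) / (x\<^sup>2 - 1)\<close> show ?thesis
    by (metis zero_le_sgn_iff)
qed

lemma right_kernel_nonpos:
  assumes "1 \<le> R" "0 \<le> x" "x \<le> R"
  shows "right_kernel R x \<le> 0"
proof -
  have sqrt_eq: "sqrt (R\<^sup>2 - 1) * x = sqrt ((R\<^sup>2 - 1) * x\<^sup>2)"
    using assms by (simp add: real_sqrt_mult)
  moreover have "(R\<^sup>2 - 1) * x\<^sup>2 - (R\<^sup>2 - x\<^sup>2) = R\<^sup>2 * (x\<^sup>2 - 1)"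
    by (simp add: algebra_simps)
  then have "0 \<le> ((R\<^sup>2 - 1) * x\<^sup>2 - (R\<^sup>2 - x\<^sup>2)) / (x\<^sup>2 - 1)"
    by (cases "x\<^sup>2 = 1") simp_all
  moreover have "x\<^sup>2 \<le> R\<^sup>2" "1 \<le> R\<^sup>2"
    using assms by (auto intro: power_mono)
  ultimately have "sgn (- right_kernel R x) = sgn (((R\<^sup>2 - 1) * x\<^sup>2 - (R\<^sup>2 - x\<^sup>2)) / (x\<^sup>2 - 1))"
    unfolding right_kernel_def sqrt_eq minus_divide_left minus_diff_eq by (intro sgn_sqrt_diff_divide) auto
  with \<open>0 \<le> ((R\<^sup>2 - 1) * x\<^sup>2 - (R\<^sup>2 - x\<^sup>2)) / (x\<^sup>2 - 1)\<close> show ?thesis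
    by (metis zero_le_sgn_iff neg_0_le_iff_le)
qed

lemma phi_remainder_eq_left_kernel:
  assumes "0 \<le> x"
  shows "(phi_numerator L R x - pi * sqrt (1 - L\<^sup>2) * (x * sqrt (R\<^sup>2 - x\<^sup>2) / (x + 1))) / (x - 1)
           = pi * sqrt (R\<^sup>2 - x\<^sup>2) * left_kernel L x"
proof -
  have "x\<^sup>2 - 1 = (x + 1) * (x - 1)"
    by (simp add: algebra_simps power2_eq_square)
  then show ?thesis
    using assms by (simp add: phi_numerator_def left_kernel_def real_sqrt_mult divide_simps)
                   (simp add: algebra_simps)
qed

lemma phi_remainder_eq_right_kernel:
  assumes "0 \<le> x"
  shows "(phi_numerator L R x - pi * sqrt (R\<^sup>2 - 1) * (x * sqrt (x\<^sup>2 - L\<^sup>2) / (x + 1))) / (x - 1)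
           = pi * sqrt (x\<^sup>2 - L\<^sup>2) * right_kernel R x"
proof -
  have "x\<^sup>2 - 1 = (x + 1) * (x - 1)"
    by (simp add: algebra_simps power2_eq_square)
  then show ?thesis
    using assms by (simp add: phi_numerator_def right_kernel_def real_sqrt_mult divide_simps)
                   (simp add: algebra_simps)
qed

lemma Phi_eq_left_kernel:
  assumes LR: "0 \<le> L" "L < 1" "1 < R"
  shows "(\<lambda>x. pi * sqrt (R\<^sup>2 - x\<^sup>2) * left_kernel L x) integrable_on {L..R}" (is ?int)
    and "Phi L R = integral {L..R} (\<lambda>x. pi * sqrt (R\<^sup>2 - x\<^sup>2) * left_kernel L x)
                   - pi * sqrt (1 - L\<^sup>2) * log_primitive (sqrt (R\<^sup>2 - 1)) (sqrt (R\<^sup>2 - L\<^sup>2))" (is ?eq)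
proof -
  define C where "C = sqrt (R\<^sup>2 - 1)"
  define n where "n x = x * sqrt (R\<^sup>2 - x\<^sup>2) / (x + 1)" for x
  have C: "0 < C" "C\<^sup>2 = R\<^sup>2 - 1"
    using LR by (simp_all add: C_def)
  have u_cont: "continuous_on {L..R} (\<lambda>x. R\<^sup>2 - x\<^sup>2)"
    by (intro continuous_intros)
  have u: "\<And>x. x \<in> {L..R} \<Longrightarrow> 0 \<le> R\<^sup>2 - x\<^sup>2" "\<And>x. x \<in> {L<..<R} \<Longrightarrow> 0 < R\<^sup>2 - x\<^sup>2"
    "\<And>x. ((\<lambda>x. R\<^sup>2 - x\<^sup>2) has_real_derivative - 2 * x) (at x)"
    using LR by (auto intro!: derivative_eq_intros power_mono power_strict_mono)
  have sing: "\<bar>C\<^sup>2 - (R\<^sup>2 - x\<^sup>2)\<bar> = \<bar>x - 1\<bar> ^ 1 * (x + 1)" if "x \<in> {L..R}" for x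
  proof -
    have "C\<^sup>2 - (R\<^sup>2 - x\<^sup>2) = (x - 1) * (x + 1)"
      using C by (simp add: algebra_simps power2_eq_square)
    then show ?thesis
      using that LR by (simp add: abs_mult)
  qed
  have q: "continuous_on {L..R} (\<lambda>x. x + 1)" "\<And>x. x \<in> {L..R} \<Longrightarrow> 0 < x + 1"
    using LR by (intro continuous_intros, auto)
  have "continuous_on {L..R} n"
    using LR unfolding n_def by (intro continuous_intros) auto
  moreover have "n differentiable (at 1)"
    using LR unfolding n_def real_differentiable_def
    by (intro exI) (auto intro!: derivative_eq_intros simp: abs_square_eq_1 abs_square_less_1 power2_gt_1_iff)
  ultimately have n: "continuous_on {L..R} n" "n differentiable (at 1)" .
  have n_eq: "n x / (x - 1) = - 2 * x * sqrt (R\<^sup>2 - x\<^sup>2) / (2 * ((R\<^sup>2 - x\<^sup>2) - C\<^sup>2))"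
    if "x \<in> {L<..<R} - {1}" for x
  proof -
    have "(R\<^sup>2 - x\<^sup>2) - C\<^sup>2 = - ((x + 1) * (x - 1))"
      using C by (simp add: algebra_simps power2_eq_square)
    then show ?thesis
      using that LR by (simp add: n_def divide_simps)
  qed
  have c: "phi_numerator L R 1 = pi * sqrt (1 - L\<^sup>2) * n 1"
    by (simp add: phi_numerator_def n_def real_sqrt_mult)
  have remainder_eq: "(phi_numerator L R x - pi * sqrt (1 - L\<^sup>2) * n x) / (x - 1)
      = pi * sqrt (R\<^sup>2 - x\<^sup>2) * left_kernel L x" if "x \<in> {L..R}" for x
    using that LR unfolding n_def by (intro phi_remainder_eq_left_kernel) auto
  show ?int
    by (rule integrable_eq[OF integrable_phi_remainder[OF LR n c] remainder_eq])
  have "integral {L..R} (\<lambda>x. (phi_numerator L R x - pi * sqrt (1 - L\<^sup>2) * n x) / (x - 1))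
      = integral {L..R} (\<lambda>x. pi * sqrt (R\<^sup>2 - x\<^sup>2) * left_kernel L x)"
    by (rule integral_cong) (rule remainder_eq)
  with Phi_eq_log_primitive[OF LR C(1) u_cont u sing q n n_eq c] C(1) show ?eq
    by (simp add: log_primitive_0 C_def)
qed

lemma Phi_eq_right_kernel:
  assumes LR: "0 \<le> L" "L < 1" "1 < R"
  shows "(\<lambda>x. pi * sqrt (x\<^sup>2 - L\<^sup>2) * right_kernel R x) integrable_on {L..R}" (is ?int)
    and "Phi L R = integral {L..R} (\<lambda>x. pi * sqrt (x\<^sup>2 - L\<^sup>2) * right_kernel R x)
                   + pi * sqrt (R\<^sup>2 - 1) * log_primitive (sqrt (1 - L\<^sup>2)) (sqrt (R\<^sup>2 - L\<^sup>2))" (is ?eq)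
proof -
  define C where "C = sqrt (1 - L\<^sup>2)"
  define n where "n x = x * sqrt (x\<^sup>2 - L\<^sup>2) / (x + 1)" for x
  have C: "0 < C" "C\<^sup>2 = 1 - L\<^sup>2"
    using LR by (simp_all add: C_def abs_square_less_1 abs_square_le_1)
  have u_cont: "continuous_on {L..R} (\<lambda>x. x\<^sup>2 - L\<^sup>2)"
    by (intro continuous_intros)
  have u: "\<And>x. x \<in> {L..R} \<Longrightarrow> 0 \<le> x\<^sup>2 - L\<^sup>2" "\<And>x. x \<in> {L<..<R} \<Longrightarrow> 0 < x\<^sup>2 - L\<^sup>2"
    "\<And>x. ((\<lambda>x. x\<^sup>2 - L\<^sup>2) has_real_derivative 2 * x) (at x)"
    using LR by (auto intro!: derivative_eq_intros power_mono power_strict_mono)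
  have sing: "\<bar>C\<^sup>2 - (x\<^sup>2 - L\<^sup>2)\<bar> = \<bar>x - 1\<bar> ^ 1 * (x + 1)" if "x \<in> {L..R}" for x
  proof -
    have "C\<^sup>2 - (x\<^sup>2 - L\<^sup>2) = - ((x - 1) * (x + 1))"
      using C by (simp add: algebra_simps power2_eq_square)
    then show ?thesis
      using that LR by (simp add: abs_mult)
  qed
  have q: "continuous_on {L..R} (\<lambda>x. x + 1)" "\<And>x. x \<in> {L..R} \<Longrightarrow> 0 < x + 1"
    using LR by (intro continuous_intros, auto)
  have "continuous_on {L..R} n"
    using LR unfolding n_def by (intro continuous_intros) auto
  moreover have "n differentiable (at 1)"
    using LR unfolding n_def real_differentiable_def
    by (intro exI) (auto intro!: derivative_eq_intros simp: abs_square_eq_1 abs_square_less_1 power2_gt_1_iff)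
  ultimately have n: "continuous_on {L..R} n" "n differentiable (at 1)" .
  have n_eq: "n x / (x - 1) = 2 * x * sqrt (x\<^sup>2 - L\<^sup>2) / (2 * ((x\<^sup>2 - L\<^sup>2) - C\<^sup>2))"
    if "x \<in> {L<..<R} - {1}" for x
  proof -
    have "(x\<^sup>2 - L\<^sup>2) - C\<^sup>2 = (x + 1) * (x - 1)"
      using C by (simp add: algebra_simps power2_eq_square)
    then show ?thesis
      using that LR by (simp add: n_def divide_simps)
  qed
  have c: "phi_numerator L R 1 = pi * sqrt (R\<^sup>2 - 1) * n 1"
    by (simp add: phi_numerator_def n_def real_sqrt_mult)
  have remainder_eq: "(phi_numerator L R x - pi * sqrt (R\<^sup>2 - 1) * n x) / (x - 1)
      = pi * sqrt (x\<^sup>2 - L\<^sup>2) * right_kernel R x" if "x \<in> {L..R}" for x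
    using that LR unfolding n_def by (intro phi_remainder_eq_right_kernel) auto
  show ?int
    by (rule integrable_eq[OF integrable_phi_remainder[OF LR n c] remainder_eq])
  have "integral {L..R} (\<lambda>x. (phi_numerator L R x - pi * sqrt (R\<^sup>2 - 1) * n x) / (x - 1))
      = integral {L..R} (\<lambda>x. pi * sqrt (x\<^sup>2 - L\<^sup>2) * right_kernel R x)"
    by (rule integral_cong) (rule remainder_eq)
  with Phi_eq_log_primitive[OF LR C(1) u_cont u sing q n n_eq c] C(1) show ?eq
    by (simp add: log_primitive_0 C_def)
qed

lemma integral_left_kernel_mono:
  assumes L: "0 \<le> L" "L < 1" and R: "1 < R\<^sub>1" "R\<^sub>1 \<le> R\<^sub>2"
  shows "integral {L..R\<^sub>1} (\<lambda>x. pi * sqrt (R\<^sub>1\<^sup>2 - x\<^sup>2) * left_kernel L x)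
           \<le> integral {L..R\<^sub>2} (\<lambda>x. pi * sqrt (R\<^sub>2\<^sup>2 - x\<^sup>2) * left_kernel L x)"
proof -
  define g where "g R x = pi * sqrt (R\<^sup>2 - x\<^sup>2) * left_kernel L x" for R x
  have int1: "g R\<^sub>1 integrable_on {L..R\<^sub>1}" and int2: "g R\<^sub>2 integrable_on {L..R\<^sub>2}"
    using Phi_eq_left_kernel(1)[of L] L R unfolding g_def by auto
  have "integral {L..R\<^sub>1} (g R\<^sub>1) \<le> integral {L..R\<^sub>1} (g R\<^sub>2)"
  proof (rule integral_le[OF int1 integrable_on_subinterval[OF int2]])
    fix x assume x: "x \<in> {L..R\<^sub>1}"
    have "sqrt (R\<^sub>1\<^sup>2 - x\<^sup>2) \<le> sqrt (R\<^sub>2\<^sup>2 - x\<^sup>2)"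
      using R L by (auto intro!: power_mono)
    then show "g R\<^sub>1 x \<le> g R\<^sub>2 x"
      unfolding g_def using left_kernel_nonneg[of L x] x L
      by (intro mult_right_mono mult_left_mono) auto
  qed (use R in auto)
  also have "\<dots> \<le> integral {L..R\<^sub>2} (g R\<^sub>2)"
  proof (rule integral_subset_le[OF _ integrable_on_subinterval[OF int2] int2])
    show "\<forall>x\<in>{L..R\<^sub>2}. 0 \<le> g R\<^sub>2 x"
      unfolding g_def using left_kernel_nonneg L by (auto intro!: mult_nonneg_nonneg power_mono)
  qed (use R in auto)
  finally show ?thesis
    unfolding g_def .
qed

lemma integral_right_kernel_mono:
  assumes L: "0 \<le> L\<^sub>1" "L\<^sub>1 \<le> L\<^sub>2" "L\<^sub>2 < 1" and R: "1 < R"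
  shows "integral {L\<^sub>1..R} (\<lambda>x. pi * sqrt (x\<^sup>2 - L\<^sub>1\<^sup>2) * right_kernel R x)
           \<le> integral {L\<^sub>2..R} (\<lambda>x. pi * sqrt (x\<^sup>2 - L\<^sub>2\<^sup>2) * right_kernel R x)"
proof -
  define g where "g L x = pi * sqrt (x\<^sup>2 - L\<^sup>2) * right_kernel R x" for L x
  have int1: "g L\<^sub>1 integrable_on {L\<^sub>1..R}" and int2: "g L\<^sub>2 integrable_on {L\<^sub>2..R}"
    using Phi_eq_right_kernel(1)[of _ R] L R unfolding g_def by auto
  have "integral {L\<^sub>1..R} (g L\<^sub>1) \<le> integral {L\<^sub>2..R} (g L\<^sub>1)"
  proof -
    have "g L\<^sub>1 x \<le> 0" if "x \<in> {L\<^sub>1..R}" for x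
      unfolding g_def using right_kernel_nonpos[of R x] that L R
      by (intro mult_nonneg_nonpos) auto
    then have "integral {L\<^sub>2..R} (\<lambda>x. - g L\<^sub>1 x) \<le> integral {L\<^sub>1..R} (\<lambda>x. - g L\<^sub>1 x)"
      using L integrable_neg[OF int1] integrable_neg[OF integrable_on_subinterval[OF int1]]
      by (intro integral_subset_le) auto
    then show ?thesis
      by simp
  qed
  also have "\<dots> \<le> integral {L\<^sub>2..R} (g L\<^sub>2)"
  proof (rule integral_le[OF integrable_on_subinterval[OF int1] int2])
    fix x assume x: "x \<in> {L\<^sub>2..R}"
    have "sqrt (x\<^sup>2 - L\<^sub>2\<^sup>2) \<le> sqrt (x\<^sup>2 - L\<^sub>1\<^sup>2)"
      using L by (auto intro!: power_mono)
    then show "g L\<^sub>1 x \<le> g L\<^sub>2 x"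
      unfolding g_def using right_kernel_nonpos[of R x] x L R
      by (intro mult_right_mono_neg mult_left_mono) auto
  qed (use L in auto)
  finally show ?thesis
    unfolding g_def .
qed

lemma strict_mono_on_Phi_right:
  assumes L: "0 \<le> L" "L < 1"
  shows "strict_mono_on {1<..} (\<lambda>R. Phi L R)"
proof (rule strict_mono_onI)
  fix R\<^sub>1 R\<^sub>2 :: real
  assume "R\<^sub>1 \<in> {1<..}" "R\<^sub>2 \<in> {1<..}" "R\<^sub>1 < R\<^sub>2"
  then have R: "1 < R\<^sub>1" "1 < R\<^sub>2" "R\<^sub>1 < R\<^sub>2"
    by simp_all
  define q where "q = sqrt (1 - L\<^sup>2)"
  have q: "0 < q"
    using L by (simp add: q_def abs_square_less_1)
  have hypot: "sqrt (R\<^sup>2 - L\<^sup>2) = sqrt ((sqrt (R\<^sup>2 - 1))\<^sup>2 + q\<^sup>2)" if "1 < R" for R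
    using that L by (simp add: q_def abs_square_less_1 abs_square_le_1)
  have "log_primitive (sqrt (R\<^sub>2\<^sup>2 - 1)) (sqrt (R\<^sub>2\<^sup>2 - L\<^sup>2))
      < log_primitive (sqrt (R\<^sub>1\<^sup>2 - 1)) (sqrt (R\<^sub>1\<^sup>2 - L\<^sup>2))"
    unfolding hypot[OF R(1)] hypot[OF R(2)] using R
    by (intro log_primitive_hypot_strict_antimono q) (auto intro: power_strict_mono)
  with q have "pi * q * log_primitive (sqrt (R\<^sub>2\<^sup>2 - 1)) (sqrt (R\<^sub>2\<^sup>2 - L\<^sup>2))
      < pi * q * log_primitive (sqrt (R\<^sub>1\<^sup>2 - 1)) (sqrt (R\<^sub>1\<^sup>2 - L\<^sup>2))"
    by simp
  with integral_left_kernel_mono[OF L R(1) less_imp_le[OF R(3)]] show "Phi L R\<^sub>1 < Phi L R\<^sub>2"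
    using Phi_eq_left_kernel(2)[OF L R(1)] Phi_eq_left_kernel(2)[OF L R(2)]
    unfolding q_def by linarith
qed

lemma strict_mono_on_Phi_left:
  assumes R: "1 < R"
  shows "strict_mono_on {0..<1} (\<lambda>L. Phi L R)"
proof (rule strict_mono_onI)
  fix L\<^sub>1 L\<^sub>2 :: real
  assume "L\<^sub>1 \<in> {0..<1}" "L\<^sub>2 \<in> {0..<1}" "L\<^sub>1 < L\<^sub>2"
  then have L: "0 \<le> L\<^sub>1" "L\<^sub>1 < 1" "0 \<le> L\<^sub>2" "L\<^sub>2 < 1" "L\<^sub>1 < L\<^sub>2"
    by simp_all
  define q where "q = sqrt (R\<^sup>2 - 1)"
  have q: "0 < q"
    using R by (simp add: q_def)
  have hypot: "sqrt (R\<^sup>2 - L\<^sup>2) = sqrt ((sqrt (1 - L\<^sup>2))\<^sup>2 + q\<^sup>2)" if "0 \<le> L" "L < 1" for L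
    using that R by (simp add: q_def abs_square_less_1 abs_square_le_1)
  have "log_primitive (sqrt (1 - L\<^sub>1\<^sup>2)) (sqrt (R\<^sup>2 - L\<^sub>1\<^sup>2))
      < log_primitive (sqrt (1 - L\<^sub>2\<^sup>2)) (sqrt (R\<^sup>2 - L\<^sub>2\<^sup>2))"
    unfolding hypot[OF L(1,2)] hypot[OF L(3,4)] using L
    by (intro log_primitive_hypot_strict_antimono q) (auto intro!: power_strict_mono simp: abs_square_le_1)
  with q have "pi * q * log_primitive (sqrt (1 - L\<^sub>1\<^sup>2)) (sqrt (R\<^sup>2 - L\<^sub>1\<^sup>2))
      < pi * q * log_primitive (sqrt (1 - L\<^sub>2\<^sup>2)) (sqrt (R\<^sup>2 - L\<^sub>2\<^sup>2))"
    by simp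
  with integral_right_kernel_mono[OF L(1) less_imp_le[OF L(5)] L(4) R] show "Phi L\<^sub>1 R < Phi L\<^sub>2 R"
    using Phi_eq_right_kernel(2)[OF L(1,2) R] Phi_eq_right_kernel(2)[OF L(3,4) R]
    unfolding q_def by linarith
qed

section \<open>The critical radius\<close>

lemma Phi_0_eq:
  assumes R: "1 < R"
  shows "Phi 0 R = pi * (sqrt (R\<^sup>2 - 1) * arcosh R - R)"
proof -
  have "integral {0..R} (\<lambda>x. pi * sqrt (R\<^sup>2 - x\<^sup>2) * left_kernel 0 x) = 0"
    by (subst integral_cong[where g = "\<lambda>_. 0"]) (auto simp: left_kernel_def)
  moreover have "\<bar>(sqrt (R\<^sup>2 - 1))\<^sup>2 - R\<^sup>2\<bar> = 1"
    using R by simp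
  ultimately show ?thesis
    using Phi_eq_left_kernel(2)[of 0 R] R
    by (simp add: log_primitive_def arcosh_real_def algebra_simps)
qed

lemma Phi_0_has_root: "\<exists>R>1. Phi 0 R = 0"
proof -
  define f where "f R = sqrt (R\<^sup>2 - 1) * arcosh R - R" for R :: real
  \<comment> \<open>the Pythagorean triples (3, 4, 5) and (5, 12, 13) make both square roots rational\<close>
  have sqrt_eq: "sqrt ((5 / 4)\<^sup>2 - 1) = (3 / 4 :: real)" "sqrt ((13 / 5)\<^sup>2 - 1) = (12 / 5 :: real)"
    by (rule real_sqrt_unique; simp add: power2_eq_square)+
  have f: "f (5 / 4) = 3 / 4 * ln 2 - 5 / 4" "f (13 / 5) = 12 / 5 * ln 5 - 13 / 5"
    by (simp_all add: f_def arcosh_real_def sqrt_eq)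
  have "ln 4 < ln (5 :: real)"
    by simp
  moreover have "ln (4 :: real) = 2 * ln 2"
    using ln_realpow[of 2 2] by simp
  ultimately have "f (5 / 4) \<le> 0" "0 \<le> f (13 / 5)"
    using f ln_2_less_1 ln2_ge_two_thirds by linarith+
  moreover have "continuous_on {5 / 4 .. 13 / 5} f"
    unfolding f_def by (intro continuous_intros continuous_on_arcosh') auto
  ultimately obtain R where "5 / 4 \<le> R" "R \<le> 13 / 5" "f R = 0"
    using IVT'[of f "5 / 4" 0 "13 / 5"] by auto
  then show ?thesis
    using Phi_0_eq[of R] by (intro exI[of _ R]) (simp add: f_def)
qed

section \<open>The curves \<open>L + R = 2\<close> and \<open>L\<^sup>2 + R\<^sup>2 = 2\<close>\<close>

lemma Phi_eq_if_sum_sq_eq_2: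
  assumes LR: "0 \<le> L" "L < 1" "1 < R" and sum: "L\<^sup>2 + R\<^sup>2 = 2"
  shows "Phi L R = - integral {L..R} (phi_numerator L R)"
proof -
  define B where "B = 1 - L\<^sup>2"
  define u where "u x = (R\<^sup>2 - x\<^sup>2) * (x\<^sup>2 - L\<^sup>2)" for x
  define n where "n x = 2 * x * sqrt (u x) / (x + 1)" for x
  have B: "0 < B"
    using LR by (simp add: B_def abs_square_less_1)
  have R2: "R\<^sup>2 = 2 - L\<^sup>2"
    using sum by simp
  have u_eq: "u x = B\<^sup>2 - (x\<^sup>2 - 1)\<^sup>2" for x
    unfolding u_def B_def R2 by (simp add: algebra_simps power2_eq_square)
  have u_cont: "continuous_on {L..R} u"
    unfolding u_def by (intro continuous_intros)
  have u: "\<And>x. x \<in> {L..R} \<Longrightarrow> 0 \<le> u x" "\<And>x. x \<in> {L<..<R} \<Longrightarrow> 0 < u x"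
    using LR unfolding u_def by (auto intro!: mult_nonneg_nonneg mult_pos_pos power_mono power_strict_mono)
  have u': "(u has_real_derivative 4 * x * (1 - x\<^sup>2)) (at x)" for x
  proof -
    have "((\<lambda>x. B\<^sup>2 - (x\<^sup>2 - 1)\<^sup>2) has_real_derivative - (2 * (x\<^sup>2 - 1) * (2 * x))) (at x)"
      by (auto intro!: derivative_eq_intros)
    then show ?thesis
      by (simp add: u_eq[abs_def] algebra_simps)
  qed
  have sing: "\<bar>B\<^sup>2 - u x\<bar> = \<bar>x - 1\<bar> ^ 2 * (x + 1)\<^sup>2" for x
  proof -
    have "B\<^sup>2 - u x = (x - 1)\<^sup>2 * (x + 1)\<^sup>2"
      unfolding u_eq by (simp add: power2_eq_square algebra_simps)
    then show ?thesis
      by (simp add: abs_mult)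
  qed
  have q: "continuous_on {L..R} (\<lambda>x. (x + 1)\<^sup>2)" "\<And>x. x \<in> {L..R} \<Longrightarrow> 0 < (x + 1)\<^sup>2"
    using LR by (intro continuous_intros, auto)
  have "continuous_on {L..R} n"
    using u_cont LR unfolding n_def by (intro continuous_intros) auto
  moreover have "n differentiable (at 1)"
    using u(2)[of 1] LR unfolding n_def real_differentiable_def
    by (intro exI) (auto intro!: derivative_eq_intros simp: u_def)
  ultimately have n: "continuous_on {L..R} n" "n differentiable (at 1)" .
  have n_eq: "n x / (x - 1) = 4 * x * (1 - x\<^sup>2) * sqrt (u x) / (2 * (u x - B\<^sup>2))"
    if "x \<in> {L<..<R} - {1}" for x
  proof -
    have "u x - B\<^sup>2 = - ((x + 1) * (x - 1) * ((x + 1) * (x - 1)))"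
      and "1 - x\<^sup>2 = - ((x + 1) * (x - 1))"
      unfolding u_eq by (simp_all add: algebra_simps power2_eq_square)
    moreover have "0 < x" "x \<noteq> 1"
      using that LR by auto
    ultimately show ?thesis
      unfolding n_def by (simp add: divide_simps)
  qed
  \<comment> \<open>\<open>pi / 2 * n x = x * phi_numerator L R x\<close>, so the remainder is \<open>- phi_numerator L R\<close>\<close>
  have c: "phi_numerator L R 1 = pi / 2 * n 1"
    by (simp add: phi_numerator_def n_def u_def)
  have "integral {L..R} (\<lambda>x. (phi_numerator L R x - pi / 2 * n x) / (x - 1))
      = integral {L..R} (\<lambda>x. - phi_numerator L R x)"
    by (rule integral_spike[of "{1}"])
       (auto simp: n_def phi_numerator_def u_def divide_simps, simp add: algebra_simps)
  then show ?thesis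
    using Phi_eq_log_primitive[OF LR B u_cont u u' sing q n n_eq c] B by (simp add: u_def log_primitive_0)
qed

lemma Phi_neg_if_sum_sq_eq_2:
  assumes LR: "0 \<le> L" "L < 1" "1 < R" and sum: "L\<^sup>2 + R\<^sup>2 = 2"
  shows "Phi L R < 0"
proof -
  define x\<^sub>0 where "x\<^sub>0 = (L + 1) / 2"
  have x\<^sub>0: "x\<^sub>0 \<in> {L<..<R}"
    using LR by (auto simp: x\<^sub>0_def)
  have "0 < integral {L..R} (phi_numerator L R)"
  proof (rule integral_pos_if_pos_at[OF _ _ x\<^sub>0])
    show "phi_numerator L R integrable_on {L..R}"
      using continuous_on_phi_numerator[OF LR(1)] by (rule integrable_continuous_interval)
    show "0 \<le> phi_numerator L R x" if "x \<in> {L..R}" for x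
      using that LR by (auto simp: phi_numerator_def intro!: mult_nonneg_nonneg power_mono)
    show "isCont (phi_numerator L R) x\<^sub>0"
      using x\<^sub>0 LR unfolding phi_numerator_def by (intro continuous_intros) auto
    have "0 < R\<^sup>2 - x\<^sub>0\<^sup>2" "0 < x\<^sub>0\<^sup>2 - L\<^sup>2"
      using x\<^sub>0 LR by (auto intro!: power_strict_mono)
    then show "0 < phi_numerator L R x\<^sub>0"
      using x\<^sub>0 LR by (simp add: phi_numerator_def)
  qed
  then show ?thesis
    using Phi_eq_if_sum_sq_eq_2[OF assms] by simp
qed

lemma phi_numerator_eq_if_sum_eq_2:
  assumes sum: "L + R = 2" and x: "0 < x + 1"
  shows "phi_numerator L R x = pi * sqrt ((1 - L)\<^sup>2 - (x - 1)\<^sup>2) * sqrt (1 - ((1 - L) / (x + 1))\<^sup>2)"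
proof -
  have R: "R = 2 - L"
    using sum by simp
  have "(R\<^sup>2 - x\<^sup>2) * (x\<^sup>2 - L\<^sup>2) = ((1 - L)\<^sup>2 - (x - 1)\<^sup>2) * ((x + 1)\<^sup>2 - (1 - L)\<^sup>2)"
    unfolding R by (simp add: algebra_simps power2_eq_square)
  also have "(x + 1)\<^sup>2 - (1 - L)\<^sup>2 = (x + 1)\<^sup>2 * (1 - ((1 - L) / (x + 1))\<^sup>2)"
    using x by (simp add: power_divide right_diff_distrib)
  finally show ?thesis
    using x by (simp add: phi_numerator_def real_sqrt_mult)
qed

lemma sqrt_one_minus_sq_divide_strict_mono:
  fixes d x y :: real
  assumes "0 < d" "0 < x + 1" "x < y"
  shows "sqrt (1 - (d / (x + 1))\<^sup>2) < sqrt (1 - (d / (y + 1))\<^sup>2)"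
proof -
  have "d / (y + 1) < d / (x + 1)"
    using assms by (intro divide_strict_left_mono) auto
  then have "(d / (y + 1))\<^sup>2 < (d / (x + 1))\<^sup>2"
    using assms by (intro power_strict_mono) auto
  then show ?thesis
    by simp
qed

lemma Phi_eq_if_sum_eq_2:
  fixes L R :: real
  defines "w \<equiv> \<lambda>x. sqrt (1 - ((1 - L) / (x + 1))\<^sup>2)"
  assumes L: "0 \<le> L" "L < 1" and sum: "L + R = 2"
  shows "(\<lambda>x. pi * sqrt ((1 - L)\<^sup>2 - (x - 1)\<^sup>2) * ((w x - w 1) / (x - 1))) integrable_on {L..R}"
      (is "?g integrable_on _")
    and "Phi L R = integral {L..R} (\<lambda>x. pi * sqrt ((1 - L)\<^sup>2 - (x - 1)\<^sup>2) * ((w x - w 1) / (x - 1)))"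
proof -
  define d where "d = 1 - L"
  define u where "u x = d\<^sup>2 - (x - 1)\<^sup>2" for x
  have d: "0 < d" "L = 1 - d" "R = 1 + d"
    using L sum by (auto simp: d_def)
  have LR: "0 \<le> L" "L < 1" "1 < R"
    using L d by auto
  have "\<bar>x - 1\<bar>\<^sup>2 \<le> d\<^sup>2" if "x \<in> {L..R}" for x
    using that d by (intro power_mono) auto
  moreover have "\<bar>x - 1\<bar>\<^sup>2 < d\<^sup>2" if "x \<in> {L<..<R}" for x
    using that d by (intro power_strict_mono) auto
  moreover have "continuous_on {L..R} u"
    unfolding u_def by (intro continuous_intros)
  ultimately have u: "continuous_on {L..R} u"
    "\<And>x. x \<in> {L..R} \<Longrightarrow> 0 \<le> u x" "\<And>x. x \<in> {L<..<R} \<Longrightarrow> 0 < u x"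
    by (auto simp: u_def)
  have u': "(u has_real_derivative - 2 * (x - 1)) (at x)" for x
    unfolding u_def by (auto intro!: derivative_eq_intros)
  have sing: "\<bar>d\<^sup>2 - u x\<bar> = \<bar>x - 1\<bar> ^ 2 * 1" for x
    by (simp add: u_def)
  have q: "continuous_on {L..R} (\<lambda>_. 1)" "\<And>x. x \<in> {L..R} \<Longrightarrow> (0::real) < 1"
    by auto
  have "continuous_on {L..R} (\<lambda>x. sqrt (u x))"
    using u(1) by (intro continuous_intros)
  moreover have "(\<lambda>x. sqrt (u x)) differentiable (at 1)"
    using d unfolding u_def real_differentiable_def by (intro exI) (auto intro!: derivative_eq_intros)
  ultimately have n: "continuous_on {L..R} (\<lambda>x. sqrt (u x))" "(\<lambda>x. sqrt (u x)) differentiable (at 1)" .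
  have n_eq: "sqrt (u x) / (x - 1) = - 2 * (x - 1) * sqrt (u x) / (2 * (u x - d\<^sup>2))"
    if "x \<in> {L<..<R} - {1}" for x
  proof -
    have "u x - d\<^sup>2 = - ((x - 1) * (x - 1))"
      by (simp add: u_def power2_eq_square)
    then show ?thesis
      using that by (simp add: divide_simps) (simp add: algebra_simps)
  qed
  have numerator_eq: "phi_numerator L R x = pi * sqrt (u x) * w x" if "x \<in> {L..R}" for x
    using that L phi_numerator_eq_if_sum_eq_2[OF sum, of x] by (simp add: u_def d_def w_def)
  have c: "phi_numerator L R 1 = pi * w 1 * sqrt (u 1)"
    using numerator_eq[of 1] LR by simp
  have remainder_eq: "(phi_numerator L R x - pi * w 1 * sqrt (u x)) / (x - 1) = ?g x"
    if "x \<in> {L..R}" for x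
    using numerator_eq[OF that] by (simp add: u_def d_def algebra_simps diff_divide_distrib)
  show "?g integrable_on {L..R}"
    by (rule integrable_eq[OF integrable_phi_remainder[OF LR n c] remainder_eq])
  have "integral {L..R} (\<lambda>x. (phi_numerator L R x - pi * w 1 * sqrt (u x)) / (x - 1))
      = integral {L..R} ?g"
    by (rule integral_cong) (rule remainder_eq)
  with Phi_eq_log_primitive[OF LR d(1) u u' sing q n n_eq c] d show "Phi L R = integral {L..R} ?g"
    by (simp add: u_def log_primitive_0)
qed

lemma Phi_pos_if_sum_eq_2:
  assumes L: "0 \<le> L" "L < 1" and sum: "L + R = 2"
  shows "0 < Phi L R"
proof -
  define w where "w x = sqrt (1 - ((1 - L) / (x + 1))\<^sup>2)" for x
  define g where "g x = pi * sqrt ((1 - L)\<^sup>2 - (x - 1)\<^sup>2) * ((w x - w 1) / (x - 1))" for x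
  have slope_pos: "0 < (w x - w 1) / (x - 1)" if "x \<in> {L..R}" "x \<noteq> 1" for x
  proof (cases "x < 1")
    case True
    then have "w x < w 1"
      using that L unfolding w_def by (intro sqrt_one_minus_sq_divide_strict_mono) auto
    with True show ?thesis
      by (simp add: divide_neg_neg)
  next
    case False
    then have "w 1 < w x"
      using that L unfolding w_def by (intro sqrt_one_minus_sq_divide_strict_mono) auto
    with False that(2) show ?thesis
      by simp
  qed
  define x\<^sub>0 where "x\<^sub>0 = (3 - L) / 2"
  have x\<^sub>0: "x\<^sub>0 \<in> {L<..<R}" "x\<^sub>0 \<in> {L..R}" "x\<^sub>0 \<noteq> 1"
    using L sum by (auto simp: x\<^sub>0_def)
  have "0 < integral {L..R} g"
  proof (rule integral_pos_if_pos_at[OF _ _ x\<^sub>0(1)])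
    show "g integrable_on {L..R}"
      using Phi_eq_if_sum_eq_2(1)[OF L sum] by (simp add: g_def[abs_def] w_def)
    show "0 \<le> g x" if x: "x \<in> {L..R}" for x
    proof (cases "x = 1")
      case False
      have "\<bar>x - 1\<bar>\<^sup>2 \<le> (1 - L)\<^sup>2"
        using x sum by (intro power_mono) auto
      then show ?thesis
        unfolding g_def using slope_pos[OF x False]
        by (intro mult_nonneg_nonneg) auto
    qed (simp add: g_def)
    show "isCont g x\<^sub>0"
      using x\<^sub>0 L unfolding g_def w_def by (intro continuous_intros) auto
    have "\<bar>x\<^sub>0 - 1\<bar>\<^sup>2 < (1 - L)\<^sup>2"
      using L by (intro power_strict_mono) (auto simp: x\<^sub>0_def)
    then show "0 < g x\<^sub>0"
      unfolding g_def using slope_pos[OF x\<^sub>0(2,3)] by (intro mult_pos_pos) auto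
  qed
  then show ?thesis
    using Phi_eq_if_sum_eq_2(2)[OF L sum] by (simp add: g_def[abs_def] w_def)
qed

lemma Phi_zero_bounds:
  assumes L: "0 \<le> L" "L < 1" and R: "1 < R" and zero: "Phi L R = 0"
  shows "L + R < 2" and "2 < L\<^sup>2 + R\<^sup>2"
proof -
  note mono = strict_mono_on_less[OF strict_mono_on_Phi_right[OF L]]
  have "Phi L R < Phi L (2 - L)"
    using Phi_pos_if_sum_eq_2[OF L, of "2 - L"] zero by simp
  then show "L + R < 2"
    using mono[of R "2 - L"] L R by simp
  define R\<^sub>0 where "R\<^sub>0 = sqrt (2 - L\<^sup>2)"
  have "L\<^sup>2 < 1"
    using L by (simp add: abs_square_less_1)
  then have R\<^sub>0: "1 < R\<^sub>0" "L\<^sup>2 + R\<^sub>0\<^sup>2 = 2"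
    by (simp_all add: R\<^sub>0_def real_less_rsqrt)
  have "Phi L R\<^sub>0 < Phi L R"
    using Phi_neg_if_sum_sq_eq_2[OF L R\<^sub>0] zero by simp
  then have "R\<^sub>0 < R"
    using mono[of R\<^sub>0 R] R R\<^sub>0 by simp
  then have "R\<^sub>0\<^sup>2 < R\<^sup>2"
    using R\<^sub>0 by (intro power_strict_mono) auto
  then show "2 < L\<^sup>2 + R\<^sup>2"
    using R\<^sub>0(2) by simp
qed

theorem lemma4p10:
  shows "(\<forall>R>1. strict_mono_on {0..<1} (\<lambda>L. Phi L R))
       \<and> (\<forall>L. 0 \<le> L \<and> L < 1 \<longrightarrow> strict_mono_on {1<..} (\<lambda>R. Phi L R))
       \<and> (\<exists>!Rc. Rc > 1 \<and> Phi 0 Rc = 0)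
       \<and> (\<forall>L R. 0 \<le> L \<and> L < 1 \<and> 1 < R \<and> Phi L R = 0 \<longrightarrow> L + R < 2 \<and> L\<^sup>2 + R\<^sup>2 > 2)"
proof -
  obtain R\<^sub>c where R\<^sub>c: "1 < R\<^sub>c" "Phi 0 R\<^sub>c = 0"
    using Phi_0_has_root by blast
  have "R = R\<^sub>c" if "1 < R" "Phi 0 R = 0" for R
    using strict_mono_on_eqD[OF strict_mono_on_Phi_right[of 0]] that R\<^sub>c by simp
  with R\<^sub>c have "\<exists>!R\<^sub>c. R\<^sub>c > 1 \<and> Phi 0 R\<^sub>c = 0"
    by blast
  then show ?thesis
    using strict_mono_on_Phi_left strict_mono_on_Phi_right Phi_zero_bounds by blast
qed

end
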